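(* Let $k\ge 1$ and $\ell$ be integers with $0\le \ell\le 2k-1$. Let $G=(V,E)$ be a multigraph (loops allowed) on $n$ vertices with $kn-\ell$ edges. The following statements are equivalent: (1) $G$ is $(k,0)$-sparse; (2) there is some set of $\ell$ edges which, when added to $G$, results in a $k$-map.
   Context: Graphs are multigraphs, possibly with loops. A graph is $(k,\ell)$-sparse if no subset $V'$ of $n'$ vertices spans more than $kn'-\ell$ edges (edges with both endpoints in $V'$). A map is a graph admitting an orientation of its edges such that every vertex has out-degree exactly $1$ (a loop contributes out-degree $1$ to its vertex). A $k$-map is a graph whose edge set can be partitioned into $k$ edge-disjoint maps on the same vertex set. *)

theory Defs
  imports Main "HOL-Library.Uprod"
begin

text \<open>A multigraph (loops allowed) is given by a vertex set V, an edge index set E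
  and an endpoint map ends assigning to each edge an unordered pair of vertices
  (a loop at v is Upair v v).\<close>

definition multigraph :: "'v set \<Rightarrow> 'e set \<Rightarrow> ('e \<Rightarrow> 'v uprod) \<Rightarrow> bool" where
  "multigraph V E ends \<longleftrightarrow> finite V \<and> finite E \<and> (\<forall>e\<in>E. set_uprod (ends e) \<subseteq> V)"

definition spanned :: "'e set \<Rightarrow> ('e \<Rightarrow> 'v uprod) \<Rightarrow> 'v set \<Rightarrow> nat" where
  "spanned E ends V' = card {e\<in>E. set_uprod (ends e) \<subseteq> V'}"

definition sparse :: "nat \<Rightarrow> int \<Rightarrow> 'v set \<Rightarrow> 'e set \<Rightarrow> ('e \<Rightarrow> 'v uprod) \<Rightarrow> bool" where
  "sparse k l V E ends \<longleftrightarrow>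
     (\<forall>V'. V' \<subseteq> V \<and> V' \<noteq> {} \<longrightarrow> int (spanned E ends V') \<le> int k * int (card V') - l)"

text \<open>A map: an orientation (choice of tail among the endpoints of each edge)
  such that every vertex has out-degree exactly 1; a loop at v is an out-edge of v.\<close>
definition is_map :: "'v set \<Rightarrow> 'e set \<Rightarrow> ('e \<Rightarrow> 'v uprod) \<Rightarrow> bool" where
  "is_map V E ends \<longleftrightarrow>
     (\<exists>tail :: 'e \<Rightarrow> 'v. (\<forall>e\<in>E. tail e \<in> set_uprod (ends e)) \<and>
        (\<forall>v\<in>V. card {e\<in>E. tail e = v} = 1))"

definition is_kmap :: "nat \<Rightarrow> 'v set \<Rightarrow> 'e set \<Rightarrow> ('e \<Rightarrow> 'v uprod) \<Rightarrow> bool" where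
  "is_kmap k V E ends \<longleftrightarrow>
     (\<exists>col :: 'e \<Rightarrow> nat. (\<forall>e\<in>E. col e < k) \<and>
        (\<forall>i<k. is_map V {e\<in>E. col e = i} ends))"

end

theory Submission
  imports Defs
begin

text \<open>A k-map carries an orientation with every out-degree equal to k; an edge spanned by V'
  has its tail in V', so V' spans at most k |V'| edges. Conversely, by Hakimi's argument a
  (k,0)-sparse graph can be oriented with all out-degrees at most k: orient the edges one at a
  time, and if some vertex a gets out-degree k+1, the vertices reachable from a along oriented
  edges cannot all have out-degree at least k, since they would span more than k times their
  number of edges; reversing a path from a to a deficient vertex repairs the orientation.
  Adding k - outdeg v loops at each vertex v (exactly l loops in total, by counting edges)
  gives an orientation with all out-degrees k, which splits into k maps by colouring the
  out-edges of each vertex with 0, ..., k-1.\<close>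

lemma card_eq_sum_card_fibres:
  assumes "finite A" "finite I" "f ` A \<subseteq> I"
  shows "card A = (\<Sum>i\<in>I. card {x\<in>A. f x = i})"
proof -
  have "A = (\<Union>i\<in>I. {x\<in>A. f x = i})" using assms(3) by auto
  also have "card \<dots> = (\<Sum>i\<in>I. card {x\<in>A. f x = i})"
    by (rule card_UN_disjoint) (use assms in auto)
  finally show ?thesis .
qed

lemma map_spanned_le:
  assumes "is_map V X ends" "finite X" "V' \<subseteq> V" "finite V'"
  shows "card {x\<in>X. set_uprod (ends x) \<subseteq> V'} \<le> card V'"
proof -
  obtain t where t: "\<forall>x\<in>X. t x \<in> set_uprod (ends x)" "\<forall>v\<in>V. card {x\<in>X. t x = v} = 1"
    using assms(1) unfolding is_map_def by blast
  have "card {x\<in>X. set_uprod (ends x) \<subseteq> V'} \<le> card {x\<in>X. t x \<in> V'}"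
    using t(1) assms(2) by (intro card_mono) auto
  also have "\<dots> = (\<Sum>v\<in>V'. card {x\<in>{x\<in>X. t x \<in> V'}. t x = v})"
    by (rule card_eq_sum_card_fibres) (use assms in auto)
  also have "\<dots> = (\<Sum>v\<in>V'. 1)"
  proof (rule sum.cong)
    fix v assume "v \<in> V'"
    then have "{x\<in>{x\<in>X. t x \<in> V'}. t x = v} = {x\<in>X. t x = v}" by auto
    then show "card {x\<in>{x\<in>X. t x \<in> V'}. t x = v} = 1" using t(2) assms(3) \<open>v \<in> V'\<close> by auto
  qed simp
  finally show ?thesis by simp
qed

lemma kmap_spanned_le:
  assumes "is_kmap k V X ends" "finite X" "V' \<subseteq> V" "finite V'"
  shows "card {x\<in>X. set_uprod (ends x) \<subseteq> V'} \<le> k * card V'"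
proof -
  obtain col where col: "\<forall>x\<in>X. col x < k" "\<forall>i<k. is_map V {x\<in>X. col x = i} ends"
    using assms(1) unfolding is_kmap_def by blast
  let ?A = "{x\<in>X. set_uprod (ends x) \<subseteq> V'}"
  have "card ?A = (\<Sum>i<k. card {x\<in>?A. col x = i})"
    by (rule card_eq_sum_card_fibres) (use col(1) assms(2) in auto)
  also have "\<dots> = (\<Sum>i<k. card {x\<in>{x\<in>X. col x = i}. set_uprod (ends x) \<subseteq> V'})"
    by (intro sum.cong refl arg_cong[where f = card]) auto
  also have "\<dots> \<le> (\<Sum>i<k. card V')"
    using col(2) assms by (intro sum_mono map_spanned_le) auto
  finally show ?thesis by simp
qed

lemma sparse_if_kmap_extension:
  fixes E :: "'e set" and g :: "nat \<Rightarrow> 'v uprod"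
  assumes "multigraph V E ends" "is_kmap k V (Inl ` E \<union> Inr ` {..<l}) (case_sum ends g)"
  shows "sparse k 0 V E ends"
  unfolding sparse_def
proof (intro allI impI)
  fix V' assume V': "V' \<subseteq> V \<and> V' \<noteq> {}"
  have fin: "finite E" "finite V'"
    using assms(1) V' finite_subset unfolding multigraph_def by auto
  have "spanned E ends V' = card (Inl ` {e\<in>E. set_uprod (ends e) \<subseteq> V'} :: ('e + nat) set)"
    unfolding spanned_def by (simp add: card_image)
  also have "\<dots> \<le> card {x\<in>Inl ` E \<union> Inr ` {..<l}. set_uprod (case_sum ends g x) \<subseteq> V'}"
    using fin by (intro card_mono) auto
  also have "\<dots> \<le> k * card V'"
    using assms(2) fin V' by (intro kmap_spanned_le) auto
  finally show "int (spanned E ends V') \<le> int k * int (card V') - 0"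
    by (simp flip: of_nat_mult)
qed

lemma kmap_if_outdeg_eq:
  assumes "finite X" "\<forall>x\<in>X. t x \<in> set_uprod (ends x) \<and> t x \<in> V"
    and "\<forall>v\<in>V. card {x\<in>X. t x = v} = k"
  shows "is_kmap k V X ends"
proof -
  define out where "out v = {x\<in>X. t x = v}" for v
  have "\<exists>c. bij_betw c (out v) {..<k}" if "v \<in> V" for v
    using assms(1,3) that unfolding out_def by (intro finite_same_card_bij) auto
  then obtain c where c: "\<And>v. v \<in> V \<Longrightarrow> bij_betw (c v) (out v) {..<k}"
    by metis
  define col where "col x = c (t x) x" for x
  have "col x < k" if "x \<in> X" for x
    using c[of "t x"] assms(2) that bij_betwE unfolding col_def out_def by fastforce
  moreover have "is_map V {x\<in>X. col x = i} ends" if "i < k" for i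
    unfolding is_map_def
  proof (intro exI conjI ballI)
    fix v assume v: "v \<in> V"
    obtain x0 where x0: "x0 \<in> out v" "c v x0 = i"
      using c[OF v] \<open>i < k\<close> unfolding bij_betw_def by (metis imageE lessThan_iff)
    have "{x\<in>{x\<in>X. col x = i}. t x = v} = {x\<in>out v. c v x = i}"
      unfolding out_def col_def by auto
    also have "\<dots> = {x0}"
      using x0 c[OF v] unfolding bij_betw_def inj_on_def by auto
    finally show "card {x\<in>{x\<in>X. col x = i}. t x = v} = 1" by simp
  qed (use assms(2) in auto)
  ultimately show ?thesis unfolding is_kmap_def by blast
qed

definition orientation :: "'e set \<Rightarrow> ('e \<Rightarrow> 'v uprod) \<Rightarrow> ('e \<Rightarrow> 'v \<times> 'v) \<Rightarrow> bool" where
  "orientation E ends r \<longleftrightarrow> (\<forall>e\<in>E. ends e = Upair (fst (r e)) (snd (r e)))"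

definition outdeg :: "'e set \<Rightarrow> ('e \<Rightarrow> 'v \<times> 'v) \<Rightarrow> 'v \<Rightarrow> nat" where
  "outdeg E r v = card {e\<in>E. fst (r e) = v}"

lemma orientation_in_vertices:
  assumes "multigraph V E ends" "orientation E ends r" "e \<in> E"
  shows "fst (r e) \<in> V" "snd (r e) \<in> V"
  using assms unfolding multigraph_def orientation_def by (metis insert_subset set_uprod_simps)+

lemma orientation_flip:
  "orientation E ends r \<Longrightarrow> orientation E ends (r(e := prod.swap (r e)))"
  unfolding orientation_def by auto

lemma outdeg_flip:
  assumes "finite E" "e \<in> E" "fst (r e) \<noteq> snd (r e)"
  defines "r' \<equiv> r(e := prod.swap (r e))"
  shows "outdeg E r' (fst (r e)) + 1 = outdeg E r (fst (r e))"
    and "outdeg E r' (snd (r e)) = outdeg E r (snd (r e)) + 1"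
    and "v \<noteq> fst (r e) \<Longrightarrow> v \<noteq> snd (r e) \<Longrightarrow> outdeg E r' v = outdeg E r v"
proof -
  let ?out = "\<lambda>r v. {e'\<in>E. fst (r e') = v}"
  have "?out r (fst (r e)) = insert e (?out r' (fst (r e)))" "e \<notin> ?out r' (fst (r e))"
    using assms by (auto simp: r'_def)
  then show "outdeg E r' (fst (r e)) + 1 = outdeg E r (fst (r e))"
    unfolding outdeg_def using assms(1) by simp
  have "?out r' (snd (r e)) = insert e (?out r (snd (r e)))" "e \<notin> ?out r (snd (r e))"
    using assms by (auto simp: r'_def)
  then show "outdeg E r' (snd (r e)) = outdeg E r (snd (r e)) + 1"
    unfolding outdeg_def using assms(1) by simp
  assume "v \<noteq> fst (r e)" "v \<noteq> snd (r e)"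
  then have "?out r' v = ?out r v" by (auto simp: r'_def)
  then show "outdeg E r' v = outdeg E r v" unfolding outdeg_def by simp
qed

fun reach :: "('e \<Rightarrow> 'v \<times> 'v) \<Rightarrow> 'e set \<Rightarrow> 'v \<Rightarrow> nat \<Rightarrow> 'v set" where
  "reach r E a 0 = {a}"
| "reach r E a (Suc d) = reach r E a d \<union> {snd (r e) |e. e \<in> E \<and> fst (r e) \<in> reach r E a d}"

lemma reach_mono: "j \<le> d \<Longrightarrow> reach r E a j \<subseteq> reach r E a d"
  by (induction d) (auto simp: le_Suc_eq)

lemma reach_subset_vertices:
  "multigraph V E ends \<Longrightarrow> orientation E ends r \<Longrightarrow> a \<in> V \<Longrightarrow> reach r E a d \<subseteq> V"
  by (induction d) (auto dest: orientation_in_vertices)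

lemma reach_flip:
  assumes "e \<in> E" "snd (r e) \<notin> reach r E a d" "j \<le> d"
  shows "reach r E a j \<subseteq> reach (r(e := prod.swap (r e))) E a j"
  using assms(3)
proof (induction j)
  case (Suc j)
  have IH: "reach r E a j \<subseteq> reach (r(e := prod.swap (r e))) E a j"
    using Suc.IH Suc.prems Suc_leD by blast
  show ?case
  proof
    fix y assume "y \<in> reach r E a (Suc j)"
    then consider "y \<in> reach r E a j"
      | e' where "e' \<in> E" "fst (r e') \<in> reach r E a j" "y = snd (r e')"
      by auto
    then show "y \<in> reach (r(e := prod.swap (r e))) E a (Suc j)"
    proof cases
      case 2
      then have "e' \<noteq> e" using assms(2) reach_mono[OF Suc.prems, of r E a] by auto
      then show ?thesis using 2 IH by force
    qed (use IH in auto)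
  qed
qed simp

lemma path_reversal:
  assumes "finite E" "orientation E ends r" "u \<in> reach r E a d" "u \<noteq> a"
  shows "\<exists>r'. orientation E ends r' \<and> outdeg E r' a + 1 = outdeg E r a \<and>
    outdeg E r' u = outdeg E r u + 1 \<and> (\<forall>v. v \<noteq> a \<longrightarrow> v \<noteq> u \<longrightarrow> outdeg E r' v = outdeg E r v)"
  using assms(2-4)
proof (induction d arbitrary: r u)
  case (Suc d)
  \<comment> \<open>If u is first reached at level Suc d through an edge e from x, flipping e leaves level d
    intact, so the path from a to x can then be reversed by induction.\<close>
  show ?case
  proof (cases "u \<in> reach r E a d")
    case True
    then show ?thesis using Suc by blast
  next
    case u_new: False
    then obtain e where e: "e \<in> E" "fst (r e) \<in> reach r E a d" "snd (r e) = u"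
      using Suc.prems(2) by auto
    define x where "x = fst (r e)"
    define r1 where "r1 = r(e := prod.swap (r e))"
    have xu: "x \<noteq> u" using e u_new x_def by auto
    have r1: "orientation E ends r1" using orientation_flip[OF Suc.prems(1)] r1_def by simp
    have deg1: "outdeg E r1 x + 1 = outdeg E r x" "outdeg E r1 u = outdeg E r u + 1"
      "\<And>v. v \<noteq> x \<Longrightarrow> v \<noteq> u \<Longrightarrow> outdeg E r1 v = outdeg E r v"
      using outdeg_flip[OF assms(1) e(1)] xu e(3) unfolding x_def r1_def by auto
    show ?thesis
    proof (cases "x = a")
      case True
      then show ?thesis using r1 deg1 by blast
    next
      case False
      have "x \<in> reach r1 E a d"
        using reach_flip[of e E r a d d] e u_new unfolding x_def r1_def by auto
      then obtain r' where "orientation E ends r'" "outdeg E r' a + 1 = outdeg E r1 a"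
        "outdeg E r' x = outdeg E r1 x + 1"
        "\<forall>v. v \<noteq> a \<longrightarrow> v \<noteq> x \<longrightarrow> outdeg E r' v = outdeg E r1 v"
        using Suc.IH[OF r1 _ False] by blast
      moreover have "outdeg E r1 a = outdeg E r a" "outdeg E r1 u = outdeg E r u + 1"
        using deg1 False Suc.prems(3) by auto
      ultimately show ?thesis
        using deg1 xu Suc.prems(3) by (intro exI[of _ r']) metis
    qed
  qed
qed simp

lemma sum_outdeg_le_spanned:
  assumes "finite E" "finite R" "orientation E ends r"
    and "\<forall>e\<in>E. fst (r e) \<in> R \<longrightarrow> snd (r e) \<in> R"
  shows "(\<Sum>v\<in>R. outdeg E r v) \<le> spanned E ends R"
proof -
  have "card {e\<in>E. fst (r e) \<in> R} = (\<Sum>v\<in>R. card {e\<in>{e\<in>E. fst (r e) \<in> R}. fst (r e) = v})"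
    by (rule card_eq_sum_card_fibres) (use assms(1,2) in auto)
  also have "\<dots> = (\<Sum>v\<in>R. outdeg E r v)"
    unfolding outdeg_def by (intro sum.cong refl arg_cong[where f = card]) auto
  finally have "(\<Sum>v\<in>R. outdeg E r v) = card {e\<in>E. fst (r e) \<in> R}" ..
  also have "\<dots> \<le> spanned E ends R"
    unfolding spanned_def using assms by (intro card_mono) (auto simp: orientation_def)
  finally show ?thesis .
qed

lemma exists_reachable_outdeg_less:
  assumes mg: "multigraph V E ends" and sp: "sparse k 0 V E ends" and r: "orientation E ends r"
    and a: "a \<in> V" "outdeg E r a > k"
  shows "\<exists>d u. u \<in> reach r E a d \<and> outdeg E r u < k"
proof (rule ccontr)
  assume no_deficit: "\<not> ?thesis"
  define R where "R = (\<Union>d. reach r E a d)"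
  have ge: "\<forall>u\<in>R. k \<le> outdeg E r u" using no_deficit unfolding R_def by (auto simp: not_less)
  have RV: "R \<subseteq> V" "R \<noteq> {}" "a \<in> R"
    unfolding R_def using reach_subset_vertices[OF mg r a(1)] reach.simps(1)[of r E a] by blast+
  have fin: "finite E" "finite R" using mg RV finite_subset unfolding multigraph_def by auto
  have "(\<Sum>u\<in>R. k) < (\<Sum>u\<in>R. outdeg E r u)"
    using ge RV a(2) fin by (intro sum_strict_mono_ex1) auto
  also have "\<dots> \<le> spanned E ends R"
  proof (rule sum_outdeg_le_spanned[OF fin r], intro ballI impI)
    fix e assume "e \<in> E" "fst (r e) \<in> R"
    then obtain d where "fst (r e) \<in> reach r E a d" unfolding R_def by blast
    then have "snd (r e) \<in> reach r E a (Suc d)" using \<open>e \<in> E\<close> by auto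
    then show "snd (r e) \<in> R" unfolding R_def by blast
  qed
  finally have "k * card R < spanned E ends R" by (simp add: mult.commute)
  moreover have "int (spanned E ends R) \<le> int k * int (card R) - 0"
    using sp RV unfolding sparse_def by blast
  ultimately show False by (simp flip: of_nat_mult)
qed

lemma sparse_subset_edges:
  assumes "sparse k l V E ends" "finite E" "E' \<subseteq> E"
  shows "sparse k l V E' ends"
proof -
  have "spanned E' ends V' \<le> spanned E ends V'" for V'
    unfolding spanned_def using assms(2,3) by (intro card_mono) auto
  then show ?thesis using assms(1) unfolding sparse_def by (meson of_nat_le_iff order_trans)
qed

lemma exists_orientation_outdeg_le:
  assumes "multigraph V E ends" "sparse k 0 V E ends"
  shows "\<exists>r. orientation E ends r \<and> (\<forall>v\<in>V. outdeg E r v \<le> k)"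
proof -
  have "finite E" using assms(1) unfolding multigraph_def by simp
  then show ?thesis using assms
  proof (induction E rule: finite_induct)
    case empty
    show ?case by (auto simp: orientation_def outdeg_def)
  next
    case (insert e E)
    let ?E = "insert e E"
    have "multigraph V E ends" using insert.prems(1) unfolding multigraph_def by auto
    moreover have "sparse k 0 V E ends"
      using sparse_subset_edges[OF insert.prems(2) _ subset_insertI] insert.hyps(1) by simp
    ultimately obtain r where r: "orientation E ends r" "\<forall>v\<in>V. outdeg E r v \<le> k"
      using insert.IH by blast
    obtain x y where xy: "ends e = Upair x y" by (cases "ends e")
    define r1 where "r1 = r(e := (x, y))"
    have r1: "orientation ?E ends r1"
      using r(1) xy insert.hyps(2) unfolding orientation_def r1_def by auto
    have deg1: "outdeg ?E r1 v = outdeg E r v + (if v = x then 1 else 0)" for v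
    proof -
      have "{e'\<in>?E. fst (r1 e') = v} = (if v = x then insert e else id) {e'\<in>E. fst (r e') = v}"
        using insert.hyps(2) by (auto simp: r1_def)
      then show ?thesis unfolding outdeg_def using insert.hyps by simp
    qed
    show ?case
    proof (cases "outdeg ?E r1 x \<le> k")
      case True
      then show ?thesis using r1 r(2) deg1 by (intro exI[of _ r1]) auto
    next
      case False
      have "x \<in> V" using insert.prems(1) xy unfolding multigraph_def by auto
      then obtain d u where u: "u \<in> reach r1 ?E x d" "outdeg ?E r1 u < k"
        using exists_reachable_outdeg_less[OF insert.prems r1] False by (meson not_le)
      have "u \<noteq> x" using u(2) False by auto
      then obtain r' where r': "orientation ?E ends r'" "outdeg ?E r' x + 1 = outdeg ?E r1 x"
        "outdeg ?E r' u = outdeg ?E r1 u + 1"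
        "\<forall>v. v \<noteq> x \<longrightarrow> v \<noteq> u \<longrightarrow> outdeg ?E r' v = outdeg ?E r1 v"
        using path_reversal[OF _ r1 u(1)] insert.hyps(1) by blast
      have "outdeg ?E r' v \<le> k" if "v \<in> V" for v
        using r'(2-4) r(2) u(2) that by (cases "v = x"; cases "v = u") (auto simp: deg1)
      then show ?thesis using r'(1) by blast
    qed
  qed
qed

lemma exists_fun_card_fibres:
  fixes m :: "'a \<Rightarrow> nat"
  assumes "finite A"
  shows "\<exists>g. (\<forall>i < sum m A. g i \<in> A) \<and> (\<forall>a\<in>A. card {i. i < sum m A \<and> g i = a} = m a)"
  using assms
proof (induction A rule: finite_induct)
  case (insert a A)
  let ?n = "sum m A"
  obtain g where g: "\<forall>i < ?n. g i \<in> A" "\<forall>b\<in>A. card {i. i < ?n \<and> g i = b} = m b"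
    using insert.IH by blast
  define g' where "g' i = (if i < ?n then g i else a)" for i
  have "{i. i < m a + ?n \<and> g' i = b} = {i. i < ?n \<and> g i = b}" if "b \<in> A" for b
    using that insert.hyps(2) unfolding g'_def by auto
  moreover have "{i. i < m a + ?n \<and> g' i = a} = {?n..<?n + m a}"
    using g(1) insert.hyps(2) unfolding g'_def by (auto simp flip: not_le)
  ultimately show ?case
    using g insert.hyps by (intro exI[of _ g']) (auto simp: g'_def)
qed simp

lemma kmap_extension_if_sparse:
  fixes E :: "'e set" and ends :: "'e \<Rightarrow> 'v uprod"
  assumes mg: "multigraph V E ends" and sp: "sparse k 0 V E ends"
    and cnt: "int (card E) = int k * int (card V) - int l"
  shows "\<exists>g :: nat \<Rightarrow> 'v uprod. (\<forall>i<l. set_uprod (g i) \<subseteq> V) \<and>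
    is_kmap k V (Inl ` E \<union> Inr ` {..<l}) (case_sum ends g)"
proof -
  obtain r where r: "orientation E ends r" "\<forall>v\<in>V. outdeg E r v \<le> k"
    using exists_orientation_outdeg_le[OF mg sp] by blast
  have fin: "finite E" "finite V" using mg unfolding multigraph_def by auto
  have tails: "fst (r e) \<in> V" "fst (r e) \<in> set_uprod (ends e)" if "e \<in> E" for e
    using orientation_in_vertices[OF mg r(1) that] r(1) that unfolding orientation_def by auto
  have "card E = (\<Sum>v\<in>V. outdeg E r v)"
    unfolding outdeg_def by (rule card_eq_sum_card_fibres) (use fin tails in auto)
  moreover have "int (card V * k) = int (card E + l)" using cnt by (simp add: mult.commute)
  ultimately have "(\<Sum>v\<in>V. k - outdeg E r v) = l"
    using r(2) by (simp only: of_nat_eq_iff sum_subtractf_nat sum_constant) simp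
  then obtain h where h: "\<forall>i<l. h i \<in> V" "\<forall>v\<in>V. card {i. i < l \<and> h i = v} = k - outdeg E r v"
    using exists_fun_card_fibres[OF fin(2), of "\<lambda>v. k - outdeg E r v"] by auto
  let ?g = "\<lambda>i. Upair (h i) (h i)"
  have "is_kmap k V (Inl ` E \<union> Inr ` {..<l}) (case_sum ends ?g)"
  proof (rule kmap_if_outdeg_eq[where t = "case_sum (\<lambda>e. fst (r e)) h"])
    show "\<forall>v\<in>V. card {x \<in> Inl ` E \<union> Inr ` {..<l}. case_sum (\<lambda>e. fst (r e)) h x = v} = k"
    proof
      fix v assume "v \<in> V"
      have "{x \<in> Inl ` E \<union> Inr ` {..<l}. case_sum (\<lambda>e. fst (r e)) h x = v} =
        {e\<in>E. fst (r e) = v} <+> {i. i < l \<and> h i = v}"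
        by (auto simp: Plus_def)
      then show "card {x \<in> Inl ` E \<union> Inr ` {..<l}. case_sum (\<lambda>e. fst (r e)) h x = v} = k"
        using fin h(2) r(2) \<open>v \<in> V\<close> by (simp add: card_Plus outdeg_def)
    qed
  qed (use fin tails h(1) in auto)
  then show ?thesis using h(1) by (intro exI[of _ ?g]) auto
qed

theorem theorem2:
  fixes k l :: nat and V :: "'v set" and E :: "'e set" and ends :: "'e \<Rightarrow> 'v uprod"
  assumes "k \<ge> 1" and "l \<le> 2 * k - 1"
    and "multigraph V E ends"
    and "int (card E) = int k * int (card V) - int l"
  shows "sparse k 0 V E ends \<longleftrightarrow>
    (\<exists>g :: nat \<Rightarrow> 'v uprod. (\<forall>i<l. set_uprod (g i) \<subseteq> V) \<and>
       is_kmap k V (Inl ` E \<union> Inr ` {..<l}) (case_sum ends g))"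
  using kmap_extension_if_sparse[OF assms(3) _ assms(4)] sparse_if_kmap_extension[OF assms(3)]
  by blast

end
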